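(* Let $n\ge m$ and let $\ell,N,p,q\in\mathbb{N}$. Let $\mathcal{S}=\{x\in\mathbb{R}^n : Fx\le\mathbf{1}_p\}$ be a C-polytope with $F\in\mathbb{R}^{p\times n}$ of full column rank and vertices $x_1,\dots,x_N$, and let $\mathscr{U}=\{u\in\mathbb{R}^m: Hu\le\mathbf{1}_q\}$ be a C-polytope with $H\in\mathbb{R}^{q\times m}$ of full column rank. Let $\delta\in\mathbb{R}^\ell$ be given, with associated matrices $A(\delta)\in\mathbb{R}^{n\times n}$, $B(\delta)\in\mathbb{R}^{n\times m}$. Set $G=\begin{bmatrix}H\\ FB(\delta)\end{bmatrix}\in\mathbb{R}^{(q+p)\times m}$ and, for each vertex $x_i$, $l^{(i)}=\begin{bmatrix}\mathbf{1}_q\\ \mathbf{1}_p-FA(\delta)x_i\end{bmatrix}\in\mathbb{R}^{q+p}$. Then the set $$\mathcal{L}_\delta=\{(C_1,\dots,C_N,d_1,\dots,d_N): C_i\in\mathbb{R}^{m\times\ell},\ d_i\in\mathbb{R}^m,\ C_i\delta+d_i\in\mathscr{U},\ A(\delta)x_i+B(\delta)(C_i\delta+d_i)\in\mathcal{S}\ \forall i\}$$ is nonempty if and only if, for every $i\in\{1,\dots,N\}$, there exist index sets $\mathcal{Q}\subset\{1,\dots,q\}$ and $\mathcal{P}\subset\{1,\dots,p\}$ such that the submatrix $G_{\mathcal{Q}\cup\mathcal{P}}\in\mathbb{R}^{m\times m}$ formed by rows $\mathcal{Q}$ of $H$ and rows $\mathcal{P}$ of $FB(\delta)$ is invertible and,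 with $l^{(i)}_{\mathcal{Q}\cup\mathcal{P}}$ the corresponding subvector of $l^{(i)}$, $$(H)_k\,G_{\mathcal{Q}\cup\mathcal{P}}^{-1}\,l^{(i)}_{\mathcal{Q}\cup\mathcal{P}}\le 1\quad\forall k\in\{1,\dots,q\}\setminus\mathcal{Q},$$ $$(FB(\delta))_k\,G_{\mathcal{Q}\cup\mathcal{P}}^{-1}\,l^{(i)}_{\mathcal{Q}\cup\mathcal{P}}\le 1-(FA(\delta)x_i)_k\quad\forall k\in\{1,\dots,p\}\setminus\mathcal{P}.$$
   Context: A C-polytope is a convex bounded polyhedron containing the origin in its interior. $(P)_k$ denotes the $k$-th row of a matrix $P$; for an index set $\mathcal{I}$, $P_{\mathcal{I}}$ (resp. $y_{\mathcal{I}}$) denotes the submatrix (subvector) of rows (entries) with indices in $\mathcal{I}$. $\mathbf{1}_p$ is the all-ones vector in $\mathbb{R}^p$. *)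

theory Defs
  imports "Jordan_Normal_Form.Gauss_Jordan_Elimination" "Jordan_Normal_Form.DL_Rank"
          "Jordan_Normal_Form.DL_Submatrix"
begin

definition ones_vec :: "nat \<Rightarrow> real vec" where
  "ones_vec k = vec k (\<lambda>_. 1)"

definition unit_polyhedron :: "nat \<Rightarrow> real mat \<Rightarrow> real vec set" where
  "unit_polyhedron n P = {x \<in> carrier_vec n. P *\<^sub>v x \<le> ones_vec (dim_row P)}"

definition C_polytope :: "nat \<Rightarrow> real vec set \<Rightarrow> bool" where
  "C_polytope n S \<longleftrightarrow> S \<subseteq> carrier_vec n
     \<and> (\<forall>x\<in>S. \<forall>y\<in>S. \<forall>t::real. 0 \<le> t \<and> t \<le> 1 \<longrightarrow> t \<cdot>\<^sub>v x + (1 - t) \<cdot>\<^sub>v y \<in> S)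
     \<and> (\<exists>M. \<forall>x\<in>S. \<forall>j<n. \<bar>x $ j\<bar> \<le> M)
     \<and> (\<exists>P b. P \<in> carrier_mat (dim_vec b) n \<and> S = {x \<in> carrier_vec n. P *\<^sub>v x \<le> b})
     \<and> (\<exists>e>0. \<forall>x\<in>carrier_vec n. (\<forall>j<n. \<bar>x $ j\<bar> < e) \<longrightarrow> x \<in> S)"

definition is_vertex :: "real vec set \<Rightarrow> real vec \<Rightarrow> bool" where
  "is_vertex S v \<longleftrightarrow> v \<in> S \<and> \<not> (\<exists>y\<in>S. \<exists>z\<in>S. y \<noteq> z \<and> (\<exists>t::real. 0 < t \<and> t < 1 \<and> v = t \<cdot>\<^sub>v y + (1 - t) \<cdot>\<^sub>v z))"

text \<open>Subvector with entries indexed by J (in increasing order), matching submatrix rows.\<close>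
definition subvec :: "'a vec \<Rightarrow> nat set \<Rightarrow> 'a vec" where
  "subvec v J = vec (card {i. i < dim_vec v \<and> i \<in> J}) (\<lambda>i. v $ pick J i)"

end

(*
  Only the input u = C_i delta + d_i enters the constraints of L_delta, and it ranges over all of
  R^m (take C_i = 0), so L_delta is nonempty iff for every vertex x_i the polyhedron
  {u. G u <= l^(i)} is nonempty. Since G contains H, which has full column rank, this polyhedron
  contains no line, and a nonempty one has a vertex: starting from a feasible point, move along a
  direction orthogonal to a linearly independent set of tight rows until one more row becomes
  tight (minimum ratio test). After m steps the tight rows J form an invertible submatrix G_J and
  G_J^-1 l_J is feasible; conversely, such a basic feasible solution is a feasible point. Writing
  J as the rows Q of H together with the rows P of F B gives the stated criterion.
*)
theory Submission
  imports Defs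
begin

section \<open>Index sets, subvectors and row submatrices\<close>

lemma pick_lessThan: "i < n \<Longrightarrow> pick {..<n} i = i"
  using pick_reduce_set[of i n UNIV] by (simp add: pick_UNIV lessThan_def)

lemma bij_betw_pick:
  assumes "finite J"
  shows "bij_betw (pick J) {..<card J} J"
proof (rule bij_betw_imageI)
  show "inj_on (pick J) {..<card J}"
    by (rule inj_onI) (metis lessThan_iff nat_neq_iff pick_mono)
  show "pick J ` {..<card J} = J"
  proof
    show "pick J ` {..<card J} \<subseteq> J" using pick_in_set by auto
    show "J \<subseteq> pick J ` {..<card J}"
    proof
      fix j assume "j \<in> J"
      then have "{a\<in>J. a < j} \<subset> J" by auto
      then have "card {a\<in>J. a < j} < card J" using assms by (simp add: psubset_card_mono)
      then show "j \<in> pick J ` {..<card J}" using pick_card_in_set[OF \<open>j \<in> J\<close>] by force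
    qed
  qed
qed

lemma ex_subset_lessThan_add_iff:
  fixes q p :: nat
  shows "(\<exists>J. J \<subseteq> {..<q + p} \<and> \<Phi> J) \<longleftrightarrow>
   (\<exists>Q P. Q \<subseteq> {..<q} \<and> P \<subseteq> {..<p} \<and> \<Phi> (Q \<union> (\<lambda>k. q + k) ` P))"
proof
  assume "\<exists>J. J \<subseteq> {..<q + p} \<and> \<Phi> J"
  then obtain J where J: "J \<subseteq> {..<q + p}" "\<Phi> J" by blast
  define Q where "Q = J \<inter> {..<q}"
  define P where "P = {k. q + k \<in> J}"
  have "J = Q \<union> (\<lambda>k. q + k) ` P"
  proof (rule subset_antisym)
    show "J \<subseteq> Q \<union> (\<lambda>k. q + k) ` P"
    proof
      fix j assume "j \<in> J"
      then show "j \<in> Q \<union> (\<lambda>k. q + k) ` P"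
        by (cases "j < q") (auto simp: Q_def P_def image_iff intro!: exI[of _ "j - q"])
    qed
  qed (auto simp: Q_def P_def)
  moreover have "Q \<subseteq> {..<q}" "P \<subseteq> {..<p}" using J(1) by (auto simp: Q_def P_def)
  ultimately show "\<exists>Q P. Q \<subseteq> {..<q} \<and> P \<subseteq> {..<p} \<and> \<Phi> (Q \<union> (\<lambda>k. q + k) ` P)"
    using J(2) by metis
next
  assume "\<exists>Q P. Q \<subseteq> {..<q} \<and> P \<subseteq> {..<p} \<and> \<Phi> (Q \<union> (\<lambda>k. q + k) ` P)"
  then obtain Q P where "Q \<subseteq> {..<q}" "P \<subseteq> {..<p}" "\<Phi> (Q \<union> (\<lambda>k. q + k) ` P)" by blast
  then show "\<exists>J. J \<subseteq> {..<q + p} \<and> \<Phi> J"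
    by (intro exI[of _ "Q \<union> (\<lambda>k. q + k) ` P"]) auto
qed

lemma ball_lessThan_add_diff_iff:
  fixes q p :: nat
  assumes Q: "Q \<subseteq> {..<q}"
  shows "(\<forall>k\<in>{..<q + p} - (Q \<union> (\<lambda>k. q + k) ` P). \<Phi> k) \<longleftrightarrow>
    (\<forall>k\<in>{..<q} - Q. \<Phi> k) \<and> (\<forall>k\<in>{..<p} - P. \<Phi> (q + k))"
proof
  assume all: "\<forall>k\<in>{..<q + p} - (Q \<union> (\<lambda>k. q + k) ` P). \<Phi> k"
  show "(\<forall>k\<in>{..<q} - Q. \<Phi> k) \<and> (\<forall>k\<in>{..<p} - P. \<Phi> (q + k))"
  proof (intro conjI ballI)
    fix k assume "k \<in> {..<q} - Q"
    then show "\<Phi> k" using all by (auto simp: image_iff)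
  next
    fix k assume "k \<in> {..<p} - P"
    moreover have "q + k \<notin> Q" using Q by auto
    ultimately show "\<Phi> (q + k)" using all by auto
  qed
next
  assume all: "(\<forall>k\<in>{..<q} - Q. \<Phi> k) \<and> (\<forall>k\<in>{..<p} - P. \<Phi> (q + k))"
  show "\<forall>k\<in>{..<q + p} - (Q \<union> (\<lambda>k. q + k) ` P). \<Phi> k"
  proof
    fix k assume k: "k \<in> {..<q + p} - (Q \<union> (\<lambda>k. q + k) ` P)"
    show "\<Phi> k"
    proof (cases "k < q")
      case True
      then show ?thesis using all k by auto
    next
      case False
      then have "k = q + (k - q)" by simp
      then have "k - q \<notin> P" using k by (metis DiffD2 UnI2 image_eqI)
      moreover have "k - q < p" using k False by auto
      ultimately have "\<Phi> (q + (k - q))" using all by blast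
      then show ?thesis using False by simp
    qed
  qed
qed

lemma subvec_carrier:
  assumes "J \<subseteq> {..<dim_vec v}"
  shows "subvec v J \<in> carrier_vec (card J)"
proof -
  have "{i. i < dim_vec v \<and> i \<in> J} = J" using assms by auto
  then show ?thesis by (simp add: subvec_def)
qed

lemma subvec_eq_iff:
  assumes "dim_vec u = dim_vec v" and J: "J \<subseteq> {..<dim_vec v}"
  shows "subvec u J = subvec v J \<longleftrightarrow> (\<forall>j\<in>J. u $ j = v $ j)"
proof -
  have "{i. i < dim_vec v \<and> i \<in> J} = J" using J by auto
  then have "subvec u J = subvec v J \<longleftrightarrow> (\<forall>a\<in>{..<card J}. u $ pick J a = v $ pick J a)"
    using assms(1) by (auto simp: subvec_def vec_eq_iff)
  also have "\<dots> \<longleftrightarrow> (\<forall>j\<in>pick J ` {..<card J}. u $ j = v $ j)"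
    by simp
  also have "\<dots> \<longleftrightarrow> (\<forall>j\<in>J. u $ j = v $ j)"
    using bij_betw_imp_surj_on[OF bij_betw_pick] J by (metis finite_lessThan finite_subset)
  finally show ?thesis .
qed

lemma submatrix_rows_carrier:
  assumes G: "G \<in> carrier_mat M m" and J: "J \<subseteq> {..<M}"
  shows "submatrix G J {..<m} \<in> carrier_mat (card J) m"
proof -
  have rows: "{r. r < dim_row G \<and> r \<in> J} = J" using G J by auto
  have cols: "{c. c < dim_col G \<and> c \<in> {..<m}} = {..<m}" using G by auto
  show ?thesis using dim_submatrix[of G J "{..<m}"] unfolding rows cols carrier_mat_def by simp
qed

lemma submatrix_rows_index:
  assumes G: "G \<in> carrier_mat M m" and J: "J \<subseteq> {..<M}" and a: "a < card J" and i: "i < m"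
  shows "submatrix G J {..<m} $$ (a, i) = G $$ (pick J a, i)"
proof -
  have rows: "{r. r < dim_row G \<and> r \<in> J} = J" using G J by auto
  have cols: "{c. c < dim_col G \<and> c \<in> {..<m}} = {..<m}" using G by auto
  show ?thesis
    using submatrix_index[of a G J i "{..<m}"] a i pick_lessThan[OF i] unfolding rows cols by simp
qed

lemma row_submatrix_rows:
  assumes G: "G \<in> carrier_mat M m" and J: "J \<subseteq> {..<M}" and a: "a < card J"
  shows "row (submatrix G J {..<m}) a = row G (pick J a)"
proof (rule eq_vecI)
  have S: "submatrix G J {..<m} \<in> carrier_mat (card J) m" by (rule submatrix_rows_carrier[OF G J])
  then show "dim_vec (row (submatrix G J {..<m}) a) = dim_vec (row G (pick J a))"
    using G by simp
  fix i assume "i < dim_vec (row G (pick J a))"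
  then have i: "i < m" using G by simp
  show "row (submatrix G J {..<m}) a $ i = row G (pick J a) $ i"
    using S G i submatrix_rows_index[OF G J a i] by (simp add: row_def)
qed

lemma submatrix_rows_mult_vec:
  assumes G: "G \<in> carrier_mat M m" and J: "J \<subseteq> {..<M}" and w: "w \<in> carrier_vec m"
  shows "submatrix G J {..<m} *\<^sub>v w = subvec (G *\<^sub>v w) J"
proof (rule eq_vecI)
  let ?S = "submatrix G J {..<m}"
  have S: "?S \<in> carrier_mat (card J) m" by (rule submatrix_rows_carrier[OF G J])
  have dim: "{i. i < dim_row G \<and> i \<in> J} = J" using G J by auto
  show "dim_vec (?S *\<^sub>v w) = dim_vec (subvec (G *\<^sub>v w) J)"
    using S by (simp add: subvec_def dim)
  fix a assume "a < dim_vec (subvec (G *\<^sub>v w) J)"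
  then have a: "a < card J" by (simp add: subvec_def dim)
  have "pick J a < M" using J pick_in_set[of a J] a by auto
  have "(?S *\<^sub>v w) $ a = row ?S a \<bullet> w" using S a by simp
  also have "\<dots> = row G (pick J a) \<bullet> w" using row_submatrix_rows[OF G J a] by simp
  also have "\<dots> = (G *\<^sub>v w) $ pick J a" using G \<open>pick J a < M\<close> by simp
  also have "\<dots> = subvec (G *\<^sub>v w) J $ a" using a by (simp add: subvec_def dim)
  finally show "(?S *\<^sub>v w) $ a = subvec (G *\<^sub>v w) J $ a" .
qed

lemma mult_vec_le_iff_rows:
  assumes "G \<in> carrier_mat M m" and "b \<in> carrier_vec M"
  shows "G *\<^sub>v w \<le> b \<longleftrightarrow> (\<forall>k<M. row G k \<bullet> w \<le> b $ k)"
  using assms unfolding less_eq_vec_def by auto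

lemma vec_add_le_iff_le_diff:
  fixes c v b :: "'a::ordered_ab_group_add vec"
  assumes "c \<in> carrier_vec n" "v \<in> carrier_vec n" "b \<in> carrier_vec n"
  shows "c + v \<le> b \<longleftrightarrow> v \<le> b - c"
  using assms unfolding less_eq_vec_def by (auto simp: le_diff_eq add.commute)

lemma scalar_prod_add_smult:
  fixes u v e :: "'a::comm_semiring_0 vec"
  assumes "u \<in> carrier_vec n" "v \<in> carrier_vec n" "e \<in> carrier_vec n"
  shows "u \<bullet> (v + t \<cdot>\<^sub>v e) = u \<bullet> v + t * (u \<bullet> e)"
proof -
  have "t \<cdot>\<^sub>v e \<in> carrier_vec n" using assms(3) by simp
  moreover have "dim_vec u = dim_vec e" using assms(1,3) by (metis carrier_vecD)
  ultimately show ?thesis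
    by (simp add: scalar_prod_add_distrib[OF assms(1,2)] scalar_prod_smult_right[OF \<open>dim_vec u = dim_vec e\<close>])
qed

lemma row_append_rows:
  assumes A: "A \<in> carrier_mat nr1 nc" and B: "B \<in> carrier_mat nr2 nc" and i: "i < nr1 + nr2"
  shows "row (A @\<^sub>r B) i = (if i < nr1 then row A i else row B (i - nr1))"
proof (rule eq_vecI)
  show "dim_vec (row (A @\<^sub>r B) i) = dim_vec (if i < nr1 then row A i else row B (i - nr1))"
    using A B by (simp add: append_rows_def)
  fix j assume "j < dim_vec (if i < nr1 then row A i else row B (i - nr1))"
  then have j: "j < nc" using A B by (simp split: if_splits)
  show "row (A @\<^sub>r B) i $ j = (if i < nr1 then row A i else row B (i - nr1)) $ j"
    using A B i j by (simp add: append_rows_def row_def)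
qed

lemma append_rows_mult_vec_eq_0D:
  assumes A: "A \<in> carrier_mat nr1 nc" and B: "B \<in> carrier_mat nr2 nc" and v: "v \<in> carrier_vec nc"
    and "(A @\<^sub>r B) *\<^sub>v v = 0\<^sub>v (nr1 + nr2)"
  shows "A *\<^sub>v v = 0\<^sub>v nr1"
proof -
  have "0\<^sub>v (nr1 + nr2) = 0\<^sub>v nr1 @\<^sub>v (0\<^sub>v nr2 :: 'a vec)" by (intro eq_vecI) auto
  then show ?thesis
    using assms mat_mult_append[OF A B v] append_vec_eq[of "A *\<^sub>v v" nr1] by simp
qed

lemma invertible_mat_iff_Units:
  assumes S: "S \<in> carrier_mat n n"
  shows "invertible_mat S \<longleftrightarrow> S \<in> Units (ring_mat TYPE('a::semiring_1) n b)"
proof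
  assume "invertible_mat S"
  then obtain T where ST: "S * T = 1\<^sub>m (dim_row S)" and TS: "T * S = 1\<^sub>m (dim_row T)"
    unfolding invertible_mat_def inverts_mat_def by blast
  have "dim_col T = n" using arg_cong[OF ST, of dim_col] S by simp
  moreover have "dim_row T = n" using arg_cong[OF TS, of dim_col] S by simp
  ultimately have "T \<in> carrier_mat n n" by auto
  with ST TS S show "S \<in> Units (ring_mat TYPE('a) n b)"
    unfolding Units_def by (simp add: ring_mat_def) blast
next
  assume "S \<in> Units (ring_mat TYPE('a) n b)"
  then obtain T where T: "T \<in> carrier_mat n n" "T * S = 1\<^sub>m n" "S * T = 1\<^sub>m n"
    unfolding Units_def by (simp add: ring_mat_def) blast
  have "inverts_mat S T" unfolding inverts_mat_def using T(3) S by simp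
  moreover have "inverts_mat T S" unfolding inverts_mat_def using T(1,2) by simp
  moreover have "square_mat S" using S by simp
  ultimately show "invertible_mat S" unfolding invertible_mat_def by blast
qed

lemma invertible_mat_if_det_neq_0:
  fixes S :: "'a::field mat"
  assumes "S \<in> carrier_mat n n" and "det S \<noteq> 0"
  shows "invertible_mat S"
  using invertible_mat_iff_Units[OF assms(1), of "()"] det_non_zero_imp_unit[OF assms] by simp

lemma invertible_mat_inverse:
  fixes S :: "'a::field mat"
  assumes S: "S \<in> carrier_mat n n" and "invertible_mat S"
  shows "the (mat_inverse S) \<in> carrier_mat n n" "S * the (mat_inverse S) = 1\<^sub>m n"
    "the (mat_inverse S) * S = 1\<^sub>m n"
proof -
  have "S \<in> Units (ring_mat TYPE('a) n ())"
    using invertible_mat_iff_Units[OF S, of "()"] assms(2) by simp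
  then have "mat_inverse S \<noteq> None" using mat_inverse(1)[OF S, where b="()"] by blast
  then obtain T where T: "mat_inverse S = Some T" by blast
  from mat_inverse(2)[OF S T] T show "the (mat_inverse S) \<in> carrier_mat n n"
    "S * the (mat_inverse S) = 1\<^sub>m n" "the (mat_inverse S) * S = 1\<^sub>m n"
    by simp_all
qed

lemma invertible_mat_inverse_mult_vec_eq_iff:
  fixes S :: "'a::field mat"
  assumes S: "S \<in> carrier_mat n n" "invertible_mat S" and c: "c \<in> carrier_vec n"
    and w: "w \<in> carrier_vec n"
  shows "the (mat_inverse S) *\<^sub>v c = w \<longleftrightarrow> S *\<^sub>v w = c"
proof
  let ?T = "the (mat_inverse S)"
  note T = invertible_mat_inverse[OF S]
  show "S *\<^sub>v w = c" if "?T *\<^sub>v c = w"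
  proof -
    have "S *\<^sub>v w = (S * ?T) *\<^sub>v c"
      unfolding that[symmetric] by (rule assoc_mult_mat_vec[OF S(1) T(1) c, symmetric])
    then show ?thesis using T(2) c by simp
  qed
  show "?T *\<^sub>v c = w" if "S *\<^sub>v w = c"
  proof -
    have "?T *\<^sub>v c = (?T * S) *\<^sub>v w"
      unfolding that[symmetric] by (rule assoc_mult_mat_vec[OF T(1) S(1) w, symmetric])
    then show ?thesis using T(3) w by simp
  qed
qed

lemma (in vec_space) distinct_cols_if_full_column_rank:
  assumes A: "A \<in> carrier_mat n nc" and "rank A = nc"
  shows "distinct (cols A)"
proof (rule ccontr)
  assume "\<not> distinct (cols A)"
  then have "card (set (cols A)) < nc"
    using A card_distinct[of "cols A"] card_length[of "cols A"]
    by (metis cols_length carrier_matD(2) le_neq_implies_less)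
  have "lin_indpt {}" unfolding lin_dep_def by blast
  then obtain S where S: "maximal S (\<lambda>T. T \<subseteq> set (cols A) \<and> lin_indpt T)"
    using maximal_exists_superset[of "set (cols A)" "\<lambda>T. T \<subseteq> set (cols A) \<and> lin_indpt T" "{}"]
    by auto
  then have "card S \<le> card (set (cols A))" by (simp add: card_mono maximal_def)
  then show False using rank_card_indpt[OF A S] \<open>rank A = nc\<close> \<open>card (set (cols A)) < nc\<close> by simp
qed

lemma (in vec_space) eq_0_if_mult_vec_eq_0_full_column_rank:
  assumes A: "A \<in> carrier_mat n nc" and "rank A = nc"
    and v: "v \<in> carrier_vec nc" "A *\<^sub>v v = 0\<^sub>v n"
  shows "v = 0\<^sub>v nc"
  using full_rank_lin_indpt[OF A] lin_depI[OF A v(1) _ v(2)] distinct_cols_if_full_column_rank[OF A]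
    assms(2) by blast

section \<open>Basic feasible solutions\<close>

definition lin_indep_rows :: "'a::field mat \<Rightarrow> nat set \<Rightarrow> bool" where
  "lin_indep_rows G J \<longleftrightarrow>
     (\<forall>c. (\<forall>i<dim_col G. (\<Sum>j\<in>J. c j * G $$ (j, i)) = 0) \<longrightarrow> (\<forall>j\<in>J. c j = 0))"

definition basic_solution :: "'a::field mat \<Rightarrow> nat \<Rightarrow> 'a vec \<Rightarrow> nat set \<Rightarrow> 'a vec" where
  "basic_solution G m b J = the (mat_inverse (submatrix G J {..<m})) *\<^sub>v subvec b J"

lemma exists_nonzero_orthogonal_vec:
  fixes V :: "'a::field vec set"
  assumes "finite V" "V \<subseteq> carrier_vec n" "card V < n"
  shows "\<exists>d\<in>carrier_vec n. d \<noteq> 0\<^sub>v n \<and> (\<forall>v\<in>V. v \<bullet> d = 0)"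
proof -
  obtain f where f: "bij_betw f {0..<card V} V" using ex_bij_betw_nat_finite[OF assms(1)] by blast
  define g where "g a = (if a < card V then f a else 0\<^sub>v n)" for a
  have g: "g a \<in> carrier_vec n" for a
    using f assms(2) by (auto simp: g_def bij_betw_def)
  have "(\<lambda>a. if a = n - 1 then 0\<^sub>v n else g a) = g" using assms(3) by (intro ext) (auto simp: g_def)
  then have "det (mat\<^sub>r n n g) = 0" using det_row_0[of "n - 1" n g] g assms(3) by simp
  then obtain d where d: "d \<in> carrier_vec n" "d \<noteq> 0\<^sub>v n" "mat\<^sub>r n n g *\<^sub>v d = 0\<^sub>v n"
    using det_0_iff_vec_prod_zero_field[OF mat_row_carrierI] by blast
  have "v \<bullet> d = 0" if "v \<in> V" for v
  proof -
    obtain a where a: "a < card V" "v = f a"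
      using f \<open>v \<in> V\<close> unfolding bij_betw_def by (metis atLeastLessThan_iff imageE)
    have "row (mat\<^sub>r n n g) a = g a" using a(1) assms(3) g by (intro row_mat_of_row_fun) auto
    then have "v \<bullet> d = (mat\<^sub>r n n g *\<^sub>v d) $ a" using a assms(3) by (simp add: g_def)
    with d(3) show ?thesis using a assms(3) by simp
  qed
  with d show ?thesis by blast
qed

lemma lin_indep_rows_insert:
  assumes indep: "lin_indep_rows G J" and "finite J"
    and e: "dim_vec e = dim_col G" and orth: "\<forall>j\<in>J. row G j \<bullet> e = 0"
    and k: "row G k \<bullet> e \<noteq> 0"
  shows "lin_indep_rows G (insert k J)"
  unfolding lin_indep_rows_def
proof (intro allI impI)
  fix c assume c: "\<forall>i<dim_col G. (\<Sum>j\<in>insert k J. c j * G $$ (j, i)) = 0"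
  have "k \<notin> J" using orth k by auto
  have row_e: "row G j \<bullet> e = (\<Sum>i<dim_col G. G $$ (j, i) * e $ i)" for j
    using e unfolding scalar_prod_def row_def by (auto simp: lessThan_atLeast0 intro!: sum.cong)
  have "(\<Sum>j\<in>insert k J. c j * (row G j \<bullet> e))
      = (\<Sum>j\<in>insert k J. \<Sum>i<dim_col G. c j * G $$ (j, i) * e $ i)"
    by (simp add: row_e sum_distrib_left mult.assoc)
  also have "\<dots> = (\<Sum>i<dim_col G. \<Sum>j\<in>insert k J. c j * G $$ (j, i) * e $ i)"
    by (rule sum.swap)
  also have "\<dots> = (\<Sum>i<dim_col G. (\<Sum>j\<in>insert k J. c j * G $$ (j, i)) * e $ i)"
    by (simp add: sum_distrib_right)
  also have "\<dots> = 0" using c by simp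
  finally have "c k = 0" using \<open>k \<notin> J\<close> \<open>finite J\<close> orth k by simp
  then have "\<forall>i<dim_col G. (\<Sum>j\<in>J. c j * G $$ (j, i)) = 0"
    using c \<open>k \<notin> J\<close> \<open>finite J\<close> by simp
  then show "\<forall>j\<in>insert k J. c j = 0" using indep \<open>c k = 0\<close> unfolding lin_indep_rows_def by blast
qed

lemma min_ratio_step:
  fixes G :: "'a::linordered_field mat"
  assumes G: "G \<in> carrier_mat M m" and b: "b \<in> carrier_vec M"
    and w: "w \<in> carrier_vec m" "G *\<^sub>v w \<le> b"
    and e: "e \<in> carrier_vec m" and k: "k < M" "row G k \<bullet> e > 0"
  obtains t k0 where "k0 < M" "row G k0 \<bullet> e > 0"
    "G *\<^sub>v (w + t \<cdot>\<^sub>v e) \<le> b" "row G k0 \<bullet> (w + t \<cdot>\<^sub>v e) = b $ k0"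
proof -
  have feasible: "row G j \<bullet> w \<le> b $ j" if "j < M" for j
    using w(2) that mult_vec_le_iff_rows[OF G b] by blast
  have step: "row G j \<bullet> (w + t \<cdot>\<^sub>v e) = row G j \<bullet> w + t * (row G j \<bullet> e)" for j t
    using G w e by (intro scalar_prod_add_smult) auto
  define K where "K = {j. j < M \<and> row G j \<bullet> e > 0}"
  define ratio where "ratio j = (b $ j - row G j \<bullet> w) / (row G j \<bullet> e)" for j
  define t where "t = Min (ratio ` K)"
  have K: "finite K" "k \<in> K" using k by (auto simp: K_def)
  then have "t \<in> ratio ` K" unfolding t_def by (intro Min_in) auto
  then obtain k0 where k0: "k0 \<in> K" "t = ratio k0" by blast
  have t_le: "t \<le> ratio j" if "j \<in> K" for j
    using K that unfolding t_def by simp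
  have "0 \<le> t" using k0 feasible unfolding ratio_def K_def by auto
  have "row G j \<bullet> (w + t \<cdot>\<^sub>v e) \<le> b $ j" if "j < M" for j
  proof (cases "j \<in> K")
    case True
    then have "row G j \<bullet> e > 0" by (simp add: K_def)
    with t_le[OF True] have "t * (row G j \<bullet> e) \<le> b $ j - row G j \<bullet> w"
      by (simp add: ratio_def pos_le_divide_eq)
    then show ?thesis by (simp add: step)
  next
    case False
    then have "t * (row G j \<bullet> e) \<le> 0"
      using that \<open>0 \<le> t\<close> by (simp add: K_def mult_nonneg_nonpos)
    then show ?thesis using feasible[OF that] by (simp add: step)
  qed
  then have "G *\<^sub>v (w + t \<cdot>\<^sub>v e) \<le> b" using mult_vec_le_iff_rows[OF G b] by blast
  moreover have "row G k0 \<bullet> (w + t \<cdot>\<^sub>v e) = b $ k0"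
    using k0 by (simp add: step K_def ratio_def)
  ultimately show ?thesis using that[of k0 t] k0(1) by (simp add: K_def)
qed

lemma extend_tight_lin_indep_rows:
  fixes G :: "'a::linordered_field mat"
  assumes G: "G \<in> carrier_mat M m"
    and ker: "\<And>v. v \<in> carrier_vec m \<Longrightarrow> G *\<^sub>v v = 0\<^sub>v M \<Longrightarrow> v = 0\<^sub>v m"
    and b: "b \<in> carrier_vec M"
    and J: "J \<subseteq> {..<M}" "card J < m" "lin_indep_rows G J"
    and w: "w \<in> carrier_vec m" "G *\<^sub>v w \<le> b" "\<forall>j\<in>J. row G j \<bullet> w = b $ j"
  obtains k w' where "k < M" "k \<notin> J" "lin_indep_rows G (insert k J)" "w' \<in> carrier_vec m"
    "G *\<^sub>v w' \<le> b" "\<forall>j\<in>insert k J. row G j \<bullet> w' = b $ j"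
proof -
  have "finite J" using J(1) finite_subset by blast
  have "card (row G ` J) < m" using card_image_le[OF \<open>finite J\<close>, of "row G"] J(2) by linarith
  moreover have "row G ` J \<subseteq> carrier_vec m" using G by auto
  ultimately obtain d where d: "d \<in> carrier_vec m" "d \<noteq> 0\<^sub>v m" "\<forall>j\<in>J. row G j \<bullet> d = 0"
    using exists_nonzero_orthogonal_vec[of "row G ` J" m] \<open>finite J\<close> by auto
  have "G *\<^sub>v d \<noteq> 0\<^sub>v M" using ker d by blast
  then obtain k where k: "k < M" "row G k \<bullet> d \<noteq> 0" using G by (auto simp: vec_eq_iff)
  \<comment> \<open>Flip \<open>d\<close> if necessary, so that moving along \<open>e\<close> eventually violates row \<open>k\<close>.\<close>
  define e where "e = (if row G k \<bullet> d > 0 then d else - d)"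
  have e: "e \<in> carrier_vec m" using d(1) by (simp add: e_def)
  have "row G j \<bullet> e = (if row G k \<bullet> d > 0 then row G j \<bullet> d else - (row G j \<bullet> d))" for j
    using G d(1) by (simp add: e_def scalar_prod_uminus_right)
  then have e_k: "row G k \<bullet> e > 0" and e_J: "\<forall>j\<in>J. row G j \<bullet> e = 0"
    using k(2) d(3) by auto
  obtain t k0 where t: "k0 < M" "row G k0 \<bullet> e > 0"
    "G *\<^sub>v (w + t \<cdot>\<^sub>v e) \<le> b" "row G k0 \<bullet> (w + t \<cdot>\<^sub>v e) = b $ k0"
    using min_ratio_step[OF G b w(1,2) e k(1) e_k] by blast
  have "k0 \<notin> J" using t(2) e_J by auto
  moreover have "lin_indep_rows G (insert k0 J)"
    using lin_indep_rows_insert[OF J(3) \<open>finite J\<close> _ e_J] t(2) e G by simp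
  moreover have "row G j \<bullet> (w + t \<cdot>\<^sub>v e) = b $ j" if "j \<in> J" for j
  proof -
    have "row G j \<bullet> (w + t \<cdot>\<^sub>v e) = row G j \<bullet> w + t * (row G j \<bullet> e)"
      using G w(1) e by (intro scalar_prod_add_smult) auto
    then show ?thesis using w(3) e_J that by simp
  qed
  ultimately show ?thesis using that[of k0 "w + t \<cdot>\<^sub>v e"] t w(1) e by simp
qed

lemma exists_tight_lin_indep_rows:
  fixes G :: "'a::linordered_field mat"
  assumes G: "G \<in> carrier_mat M m"
    and ker: "\<And>v. v \<in> carrier_vec m \<Longrightarrow> G *\<^sub>v v = 0\<^sub>v M \<Longrightarrow> v = 0\<^sub>v m"
    and b: "b \<in> carrier_vec M" and u: "u \<in> carrier_vec m" "G *\<^sub>v u \<le> b" and "r \<le> m"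
  shows "\<exists>J w. J \<subseteq> {..<M} \<and> card J = r \<and> lin_indep_rows G J \<and> w \<in> carrier_vec m
    \<and> G *\<^sub>v w \<le> b \<and> (\<forall>j\<in>J. row G j \<bullet> w = b $ j)"
  using \<open>r \<le> m\<close>
proof (induction r)
  case 0
  have "lin_indep_rows G {}" by (simp add: lin_indep_rows_def)
  then show ?case using u by (intro exI[of _ "{}"] exI[of _ u]) auto
next
  case (Suc r)
  then obtain J w where J: "J \<subseteq> {..<M}" "card J = r" "lin_indep_rows G J"
    and w: "w \<in> carrier_vec m" "G *\<^sub>v w \<le> b" "\<forall>j\<in>J. row G j \<bullet> w = b $ j"
    by auto
  have "card J < m" using J(2) Suc.prems by simp
  obtain k w' where "k < M" "k \<notin> J" "lin_indep_rows G (insert k J)" "w' \<in> carrier_vec m"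
    "G *\<^sub>v w' \<le> b" "\<forall>j\<in>insert k J. row G j \<bullet> w' = b $ j"
    by (rule extend_tight_lin_indep_rows[OF G ker b J(1) \<open>card J < m\<close> J(3) w])
  moreover have "card (insert k J) = Suc r"
    using \<open>k \<notin> J\<close> J(1,2) finite_subset by fastforce
  ultimately show ?case using J(1) by (intro exI[of _ "insert k J"] exI[of _ w']) auto
qed

lemma det_submatrix_rows_neq_0:
  fixes G :: "'a::field mat"
  assumes G: "G \<in> carrier_mat M m" and J: "J \<subseteq> {..<M}" "card J = m" "lin_indep_rows G J"
  shows "det (submatrix G J {..<m}) \<noteq> 0"
proof
  let ?S = "submatrix G J {..<m}"
  have S: "?S \<in> carrier_mat m m" using submatrix_rows_carrier[OF G J(1)] J(2) by simp
  assume "det ?S = 0"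
  then have "det (transpose_mat ?S) = 0" using det_transpose[OF S] by simp
  then obtain v where v: "v \<in> carrier_vec m" "v \<noteq> 0\<^sub>v m" "transpose_mat ?S *\<^sub>v v = 0\<^sub>v m"
    using det_0_iff_vec_prod_zero_field[of "transpose_mat ?S" m] S by auto
  \<comment> \<open>Re-index \<open>v\<close> by row numbers: \<open>j \<in> J\<close> is the row at position \<open>card {a\<in>J. a < j}\<close> of the submatrix.\<close>
  define c where "c j = v $ card {a\<in>J. a < j}" for j
  have "finite J" using J(1) by (meson finite_lessThan finite_subset)
  have c_pick: "c (pick J a) = v $ a" if "a < m" for a
    using that J(2) card_pick[of a J] by (simp add: c_def)
  have "(\<Sum>j\<in>J. c j * G $$ (j, i)) = 0" if i: "i < m" for i
  proof -
    have "(\<Sum>j\<in>J. c j * G $$ (j, i)) = (\<Sum>a<m. c (pick J a) * G $$ (pick J a, i))"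
      using sum.reindex_bij_betw[OF bij_betw_pick[OF \<open>finite J\<close>], of "\<lambda>j. c j * G $$ (j, i)"] J(2)
      by simp
    also have "\<dots> = (\<Sum>a<m. ?S $$ (a, i) * v $ a)"
      using submatrix_rows_index[OF G J(1)] J(2) i c_pick by (intro sum.cong) (auto simp: mult.commute)
    also have "\<dots> = (transpose_mat ?S *\<^sub>v v) $ i"
      using S v(1) i by (auto simp: scalar_prod_def lessThan_atLeast0 intro!: sum.cong)
    finally show ?thesis using v(3) i by simp
  qed
  then have "\<forall>j\<in>J. c j = 0" using J(3) G unfolding lin_indep_rows_def by auto
  then have "v $ a = 0" if "a < m" for a
    using c_pick[OF that] pick_in_set[of a J] that J(2) by simp
  then have "v = 0\<^sub>v m" using v(1) by (intro eq_vecI) auto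
  with v(2) show False by simp
qed

lemma basic_solution_carrier:
  fixes G :: "'a::field mat"
  assumes G: "G \<in> carrier_mat M m" and J: "J \<subseteq> {..<M}" "card J = m"
    and inv: "invertible_mat (submatrix G J {..<m})" and b: "b \<in> carrier_vec M"
  shows "basic_solution G m b J \<in> carrier_vec m"
proof -
  have S: "submatrix G J {..<m} \<in> carrier_mat m m"
    using submatrix_rows_carrier[OF G J(1)] J(2) by simp
  have bJ: "subvec b J \<in> carrier_vec m" using subvec_carrier[of J b] J b by simp
  show ?thesis
    unfolding basic_solution_def by (rule mult_mat_vec_carrier[OF invertible_mat_inverse(1)[OF S inv] bJ])
qed

lemma basic_solution_eq_iff:
  fixes G :: "'a::field mat"
  assumes G: "G \<in> carrier_mat M m" and J: "J \<subseteq> {..<M}" "card J = m"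
    and inv: "invertible_mat (submatrix G J {..<m})" and b: "b \<in> carrier_vec M"
    and w: "w \<in> carrier_vec m"
  shows "basic_solution G m b J = w \<longleftrightarrow> (\<forall>j\<in>J. row G j \<bullet> w = b $ j)"
proof -
  have S: "submatrix G J {..<m} \<in> carrier_mat m m"
    using submatrix_rows_carrier[OF G J(1)] J(2) by simp
  have bJ: "subvec b J \<in> carrier_vec m" using subvec_carrier[of J b] J b by simp
  have "basic_solution G m b J = w \<longleftrightarrow> submatrix G J {..<m} *\<^sub>v w = subvec b J"
    unfolding basic_solution_def by (rule invertible_mat_inverse_mult_vec_eq_iff[OF S inv bJ w])
  also have "\<dots> \<longleftrightarrow> subvec (G *\<^sub>v w) J = subvec b J"
    by (simp add: submatrix_rows_mult_vec[OF G J(1) w])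
  also have "\<dots> \<longleftrightarrow> (\<forall>j\<in>J. (G *\<^sub>v w) $ j = b $ j)"
    using G b J(1) by (intro subvec_eq_iff) auto
  also have "\<dots> \<longleftrightarrow> (\<forall>j\<in>J. row G j \<bullet> w = b $ j)"
  proof -
    have "(G *\<^sub>v w) $ j = row G j \<bullet> w" if "j \<in> J" for j
      using G J(1) that by auto
    then show ?thesis by simp
  qed
  finally show ?thesis .
qed

theorem feasible_iff_basic_feasible:
  fixes G :: "'a::linordered_field mat"
  assumes G: "G \<in> carrier_mat M m"
    and ker: "\<And>v. v \<in> carrier_vec m \<Longrightarrow> G *\<^sub>v v = 0\<^sub>v M \<Longrightarrow> v = 0\<^sub>v m"
    and b: "b \<in> carrier_vec M"
  shows "(\<exists>u\<in>carrier_vec m. G *\<^sub>v u \<le> b) \<longleftrightarrow>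
    (\<exists>J. J \<subseteq> {..<M} \<and> dim_row (submatrix G J {..<m}) = m \<and> invertible_mat (submatrix G J {..<m})
       \<and> (\<forall>k\<in>{..<M} - J. row G k \<bullet> basic_solution G m b J \<le> b $ k))"
    (is "?feasible \<longleftrightarrow> (\<exists>J. ?basic_feasible J)")
proof
  assume ?feasible
  then obtain u where u: "u \<in> carrier_vec m" "G *\<^sub>v u \<le> b" by blast
  obtain J w where J: "J \<subseteq> {..<M}" "card J = m" "lin_indep_rows G J"
    and w: "w \<in> carrier_vec m" "G *\<^sub>v w \<le> b" "\<forall>j\<in>J. row G j \<bullet> w = b $ j"
    using exists_tight_lin_indep_rows[OF G ker b u order.refl] by blast
  have S: "submatrix G J {..<m} \<in> carrier_mat m m"
    using submatrix_rows_carrier[OF G J(1)] J(2) by simp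
  have inv: "invertible_mat (submatrix G J {..<m})"
    using invertible_mat_if_det_neq_0[OF S det_submatrix_rows_neq_0[OF G J]] .
  have "basic_solution G m b J = w"
    using basic_solution_eq_iff[OF G J(1,2) inv b w(1)] w(3) by simp
  then have "?basic_feasible J" using J(1) S inv w(2) mult_vec_le_iff_rows[OF G b] by auto
  then show "\<exists>J. ?basic_feasible J" by blast
next
  assume "\<exists>J. ?basic_feasible J"
  then obtain J where J: "J \<subseteq> {..<M}" "dim_row (submatrix G J {..<m}) = m"
    and inv: "invertible_mat (submatrix G J {..<m})"
    and outside: "\<forall>k\<in>{..<M} - J. row G k \<bullet> basic_solution G m b J \<le> b $ k"
    by blast
  have card: "card J = m" using J submatrix_rows_carrier[OF G J(1)] by simp
  have w: "basic_solution G m b J \<in> carrier_vec m"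
    by (rule basic_solution_carrier[OF G J(1) card inv b])
  have "\<forall>j\<in>J. row G j \<bullet> basic_solution G m b J = b $ j"
    using basic_solution_eq_iff[OF G J(1) card inv b w] by simp
  with outside have "G *\<^sub>v basic_solution G m b J \<le> b"
    unfolding mult_vec_le_iff_rows[OF G b] by (metis DiffI lessThan_iff order.refl)
  with w show ?feasible by blast
qed

section \<open>Feasibility of the affine control laws\<close>

lemma admissible_input_iff_append_rows_le:
  fixes F H A B :: "real mat" and y u :: "real vec"
  assumes F: "F \<in> carrier_mat p n" and H: "H \<in> carrier_mat q m"
    and A: "A \<in> carrier_mat n n" and B: "B \<in> carrier_mat n m"
    and y: "y \<in> carrier_vec n" and u: "u \<in> carrier_vec m"
  shows "u \<in> unit_polyhedron m H \<and> A *\<^sub>v y + B *\<^sub>v u \<in> unit_polyhedron n F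
    \<longleftrightarrow> (H @\<^sub>r (F * B)) *\<^sub>v u \<le> ones_vec q @\<^sub>v (ones_vec p - F *\<^sub>v (A *\<^sub>v y))"
proof -
  let ?c = "F *\<^sub>v (A *\<^sub>v y)"
  have FB: "F * B \<in> carrier_mat p m" using F B by simp
  have c: "?c \<in> carrier_vec p" using F A y by simp
  have ones: "ones_vec k \<in> carrier_vec k" for k by (simp add: ones_vec_def)
  have "F *\<^sub>v (A *\<^sub>v y + B *\<^sub>v u) = ?c + (F * B) *\<^sub>v u"
    using F A B y u by (simp add: mult_add_distrib_mat_vec[OF F])
  then have "A *\<^sub>v y + B *\<^sub>v u \<in> unit_polyhedron n F \<longleftrightarrow> (F * B) *\<^sub>v u \<le> ones_vec p - ?c"
    using A B F FB y u c ones vec_add_le_iff_le_diff[OF c, of "(F * B) *\<^sub>v u" "ones_vec p"]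
    by (simp add: unit_polyhedron_def)
  moreover have "u \<in> unit_polyhedron m H \<longleftrightarrow> H *\<^sub>v u \<le> ones_vec q"
    using u H by (simp add: unit_polyhedron_def)
  ultimately show ?thesis using append_rows_le[OF H FB ones u] by simp
qed

lemma exists_admissible_input_iff:
  fixes F H A B :: "real mat" and y :: "real vec"
  assumes F: "F \<in> carrier_mat p n" and H: "H \<in> carrier_mat q m"
    and H_ker: "\<And>v. v \<in> carrier_vec m \<Longrightarrow> H *\<^sub>v v = 0\<^sub>v q \<Longrightarrow> v = 0\<^sub>v m"
    and A: "A \<in> carrier_mat n n" and B: "B \<in> carrier_mat n m" and y: "y \<in> carrier_vec n"
  shows "(\<exists>u\<in>carrier_vec m. u \<in> unit_polyhedron m H \<and> A *\<^sub>v y + B *\<^sub>v u \<in> unit_polyhedron n F)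
    \<longleftrightarrow>
     (\<exists>Q P. Q \<subseteq> {..<q} \<and> P \<subseteq> {..<p} \<and>
        (let G = H @\<^sub>r (F * B);
             li = ones_vec q @\<^sub>v (ones_vec p - F *\<^sub>v (A *\<^sub>v y));
             J = Q \<union> (\<lambda>k. q + k) ` P;
             GJ = submatrix G J {..<m};
             w = the (mat_inverse GJ) *\<^sub>v subvec li J
         in dim_row GJ = m \<and> invertible_mat GJ
            \<and> (\<forall>k\<in>{..<q} - Q. row H k \<bullet> w \<le> 1)
            \<and> (\<forall>k\<in>{..<p} - P. row (F * B) k \<bullet> w \<le> 1 - (F *\<^sub>v (A *\<^sub>v y)) $ k)))"
    (is "_ \<longleftrightarrow> ?basis_condition")
proof -
  define c where "c = F *\<^sub>v (A *\<^sub>v y)"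
  define G where "G = H @\<^sub>r (F * B)"
  define li where "li = ones_vec q @\<^sub>v (ones_vec p - c)"
  have FB: "F * B \<in> carrier_mat p m" using F B by simp
  have G: "G \<in> carrier_mat (q + p) m" using H FB by (simp add: G_def)
  have li: "li \<in> carrier_vec (q + p)" using F A y by (simp add: li_def c_def ones_vec_def)
  have G_ker: "v = 0\<^sub>v m" if "v \<in> carrier_vec m" "G *\<^sub>v v = 0\<^sub>v (q + p)" for v
    using H_ker append_rows_mult_vec_eq_0D[OF H FB] that by (simp add: G_def)
  have row_G_H: "row G k = row H k" if "k < q" for k
    using row_append_rows[OF H FB] that by (simp add: G_def)
  have row_G_FB: "row G (q + k) = row (F * B) k" if "k < p" for k
    using row_append_rows[OF H FB] that by (simp add: G_def)
  have li_H: "li $ k = 1" if "k < q" for k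
    using that F A y by (simp add: li_def c_def ones_vec_def)
  have li_FB: "li $ (q + k) = 1 - c $ k" if "k < p" for k
    using that F A y by (simp add: li_def c_def ones_vec_def)
  have "(\<exists>u\<in>carrier_vec m. u \<in> unit_polyhedron m H \<and> A *\<^sub>v y + B *\<^sub>v u \<in> unit_polyhedron n F)
      \<longleftrightarrow> (\<exists>u\<in>carrier_vec m. G *\<^sub>v u \<le> li)"
    using admissible_input_iff_append_rows_le[OF F H A B y] by (simp add: G_def li_def c_def)
  also have "\<dots> \<longleftrightarrow> (\<exists>J. J \<subseteq> {..<q + p} \<and> dim_row (submatrix G J {..<m}) = m
      \<and> invertible_mat (submatrix G J {..<m})
      \<and> (\<forall>k\<in>{..<q + p} - J. row G k \<bullet> basic_solution G m li J \<le> li $ k))"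
    (is "_ \<longleftrightarrow> (\<exists>J. J \<subseteq> _ \<and> ?basic_feasible J)")
    by (rule feasible_iff_basic_feasible[OF G G_ker li])
  also have "\<dots> \<longleftrightarrow> (\<exists>Q P. Q \<subseteq> {..<q} \<and> P \<subseteq> {..<p} \<and> ?basic_feasible (Q \<union> (\<lambda>k. q + k) ` P))"
    by (rule ex_subset_lessThan_add_iff)
  also have "\<dots> \<longleftrightarrow> ?basis_condition"
    unfolding Let_def c_def[symmetric] G_def[symmetric] li_def[symmetric] basic_solution_def[symmetric]
  proof (intro ex_cong1 conj_cong refl)
    fix Q P assume "Q \<subseteq> {..<q}"
    show "(\<forall>k\<in>{..<q + p} - (Q \<union> (\<lambda>k. q + k) ` P).
            row G k \<bullet> basic_solution G m li (Q \<union> (\<lambda>k. q + k) ` P) \<le> li $ k)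
      \<longleftrightarrow> (\<forall>k\<in>{..<q} - Q. row H k \<bullet> basic_solution G m li (Q \<union> (\<lambda>k. q + k) ` P) \<le> 1)
        \<and> (\<forall>k\<in>{..<p} - P. row (F * B) k \<bullet> basic_solution G m li (Q \<union> (\<lambda>k. q + k) ` P) \<le> 1 - c $ k)"
      using ball_lessThan_add_diff_iff[OF \<open>Q \<subseteq> {..<q}\<close>] row_G_H row_G_FB li_H li_FB by simp
  qed
  finally show ?thesis .
qed

lemma ex_affine_inputs_iff:
  assumes "\<delta> \<in> carrier_vec l"
  shows "(\<exists>C d. \<forall>i<N. C i \<in> carrier_mat m l \<and> d i \<in> carrier_vec m \<and> R i (C i *\<^sub>v \<delta> + d i))
    \<longleftrightarrow> (\<forall>i<N. \<exists>u\<in>carrier_vec m. R i u)"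
proof
  assume "\<exists>C d. \<forall>i<N. C i \<in> carrier_mat m l \<and> d i \<in> carrier_vec m \<and> R i (C i *\<^sub>v \<delta> + d i)"
  then show "\<forall>i<N. \<exists>u\<in>carrier_vec m. R i u" using assms by fastforce
next
  assume "\<forall>i<N. \<exists>u\<in>carrier_vec m. R i u"
  then obtain d where d: "\<forall>i<N. d i \<in> carrier_vec m \<and> R i (d i)" by metis
  have "0\<^sub>m m l *\<^sub>v \<delta> + d i = d i" if "i < N" for i
    using assms d that by (auto intro!: eq_vecI)
  then show "\<exists>C d. \<forall>i<N. C i \<in> carrier_mat m l \<and> d i \<in> carrier_vec m \<and> R i (C i *\<^sub>v \<delta> + d i)"
    using d by (intro exI[of _ "\<lambda>_. 0\<^sub>m m l"] exI[of _ d]) auto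
qed

theorem lemma2:
  fixes n m l N p q :: nat
    and F :: "real mat" and H :: "real mat"
    and x :: "nat \<Rightarrow> real vec"
    and \<delta> :: "real vec" and A B :: "real mat"
  assumes "n \<ge> m"
    and F: "F \<in> carrier_mat p n" and F_rank: "vec_space.rank p F = n"
    and S: "C_polytope n (unit_polyhedron n F)"
    and verts: "{x i | i. i < N} = {v. is_vertex (unit_polyhedron n F) v}"
    and inj: "inj_on x {..<N}"
    and H: "H \<in> carrier_mat q m" and H_rank: "vec_space.rank q H = m"
    and U: "C_polytope m (unit_polyhedron m H)"
    and \<delta>: "\<delta> \<in> carrier_vec l"
    and A: "A \<in> carrier_mat n n" and B: "B \<in> carrier_mat n m"
  shows "(\<exists>C d. \<forall>i<N. C i \<in> carrier_mat m l \<and> d i \<in> carrier_vec m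
            \<and> C i *\<^sub>v \<delta> + d i \<in> unit_polyhedron m H
            \<and> A *\<^sub>v x i + B *\<^sub>v (C i *\<^sub>v \<delta> + d i) \<in> unit_polyhedron n F)
     \<longleftrightarrow>
     (\<forall>i<N. \<exists>Q P. Q \<subseteq> {..<q} \<and> P \<subseteq> {..<p} \<and>
        (let G = H @\<^sub>r (F * B);
             li = ones_vec q @\<^sub>v (ones_vec p - F *\<^sub>v (A *\<^sub>v x i));
             J = Q \<union> (\<lambda>k. q + k) ` P;
             GJ = submatrix G J {..<m};
             w = the (mat_inverse GJ) *\<^sub>v subvec li J
         in dim_row GJ = m \<and> invertible_mat GJ
            \<and> (\<forall>k\<in>{..<q} - Q. row H k \<bullet> w \<le> 1)
            \<and> (\<forall>k\<in>{..<p} - P. row (F * B) k \<bullet> w \<le> 1 - (F *\<^sub>v (A *\<^sub>v x i)) $ k)))"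
proof -
  have H_ker: "v = 0\<^sub>v m" if "v \<in> carrier_vec m" "H *\<^sub>v v = 0\<^sub>v q" for v
    using vec_space.eq_0_if_mult_vec_eq_0_full_column_rank[OF H H_rank that] .
  have x: "x i \<in> carrier_vec n" if "i < N" for i
  proof -
    have "is_vertex (unit_polyhedron n F) (x i)" using verts that by blast
    then show ?thesis unfolding is_vertex_def unit_polyhedron_def by blast
  qed
  show ?thesis
    unfolding ex_affine_inputs_iff[OF \<delta>, where R = "\<lambda>i u. u \<in> unit_polyhedron m H
      \<and> A *\<^sub>v x i + B *\<^sub>v u \<in> unit_polyhedron n F"]
    using exists_admissible_input_iff[OF F H H_ker A B x] by blast
qed

end
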